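(* Let $n \ge 1$ and $d \ge 1$, and let $\Omega_1, \dots, \Omega_n \subseteq \mathbb{R}^d$ be nonempty, compact, convex sets. Let $r^*$ be the smallest radius of a closed Euclidean ball intersecting every $\Omega_i$, i.e. $r^* = \min_{\mathbf{x} \in \mathbb{R}^d} \max_{i \in [n]} \operatorname{dist}(\mathbf{x}, \Omega_i)$. Consider the zero-sum game \[ \min_{(\mathbf{x}, \mathbf{v}_1, \dots, \mathbf{v}_n) \in \mathcal{X} \times \mathcal{V}} \ \max_{\mathbf{y} \in \mathcal{Y}} \ f\big((\mathbf{x}, \mathbf{v}_1,\dots,\mathbf{v}_n), \mathbf{y}\big), \qquad f\big((\mathbf{x}, \mathbf{v}_1,\dots,\mathbf{v}_n), \mathbf{y}\big) := \sum_{i=1}^n \begin{pmatrix} \mathbf{x} - \mathbf{v}_i \\ 0 \end{pmatrix}^{\!\top} \begin{pmatrix} \mathbf{y}_i \\ s_i \end{pmatrix} = \sum_{i=1}^n (\mathbf{x} - \mathbf{v}_i)^\top \mathbf{y}_i, \] where $\mathbf{y} = ((\mathbf{y}_1, s_1), \dots, (\mathbf{y}_n, s_n))$. Then a Nash equilibrium $(\mathbf{x}^*, \mathbf{v}_1^*, \dots, \mathbf{v}_n^*, \mathbf{y}^* )$ of this game exists, and the value of the game is $r^*$. Moreover, for such a Nash equilibrium, the closed ball $B(\mathbf{x}^*, r^* )$ intersects every $\Omega_i$, and $\mathbf{v}_i^* \in B(\mathbf{x}^*, r^* ) \cap \Omega_i$ for every $i \in [n]$.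
   Context: $\|\cdot\|$ is the Euclidean norm, $B(\mathbf{x}, r)$ is the closed Euclidean ball of center $\mathbf{x}$ and radius $r$, and $[n] = \{1,\dots,n\}$. $\mathcal{X}$ is the convex hull of $\Omega_1 \cup \dots \cup \Omega_n$; $\mathcal{V} := \Omega_1 \times \dots \times \Omega_n$; and \[ \mathcal{Y} := \Big\{ ((\mathbf{y}_1, s_1), \dots, (\mathbf{y}_n, s_n)) \in (\mathbb{R}^{d} \times \mathbb{R})^n : \|\mathbf{y}_i\| \le s_i \ \forall i \in [n], \ \sum_{i=1}^n s_i = 1 \Big\}. \] For a zero-sum game $\min_{\mathbf{p} \in \mathcal{P}} \max_{\mathbf{q} \in \mathcal{Q}} f(\mathbf{p}, \mathbf{q})$, a pair $(\mathbf{p}^*, \mathbf{q}^* ) \in \mathcal{P}\times\mathcal{Q}$ is a Nash equilibrium iff $f(\mathbf{p}^*, \mathbf{q}^* ) \le f(\mathbf{p}, \mathbf{q}^* )$ for all $\mathbf{p} \in \mathcal{P}$ and $f(\mathbf{p}^*, \mathbf{q}^* ) \ge f(\mathbf{p}^*, \mathbf{q})$ for all $\mathbf{q} \in \mathcal{Q}$; the value of the game is then $f(\mathbf{p}^*, \mathbf{q}^* )$. *)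

theory Defs
  imports "HOL-Analysis.Analysis"
begin

definition nash_eq :: "'p set \<Rightarrow> 'q set \<Rightarrow> ('p \<Rightarrow> 'q \<Rightarrow> real) \<Rightarrow> 'p \<Rightarrow> 'q \<Rightarrow> bool" where
  "nash_eq P Q f p q \<longleftrightarrow> p \<in> P \<and> q \<in> Q \<and>
     (\<forall>p'\<in>P. f p q \<le> f p' q) \<and> (\<forall>q'\<in>Q. f p q \<ge> f p q')"

definition game_X :: "nat \<Rightarrow> (nat \<Rightarrow> 'a::euclidean_space set) \<Rightarrow> 'a set" where
  "game_X n \<Omega> = convex hull (\<Union>i\<in>{1..n}. \<Omega> i)"

definition game_V :: "nat \<Rightarrow> (nat \<Rightarrow> 'a::euclidean_space set) \<Rightarrow> (nat \<Rightarrow> 'a) set" where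
  "game_V n \<Omega> = PiE {1..n} \<Omega>"

definition game_Y :: "nat \<Rightarrow> (nat \<Rightarrow> 'a::euclidean_space \<times> real) set" where
  "game_Y n = {y \<in> PiE {1..n} (\<lambda>_. UNIV).
      (\<forall>i\<in>{1..n}. norm (fst (y i)) \<le> snd (y i)) \<and> (\<Sum>i=1..n. snd (y i)) = 1}"

definition game_f :: "nat \<Rightarrow> 'a::euclidean_space \<times> (nat \<Rightarrow> 'a) \<Rightarrow> (nat \<Rightarrow> 'a \<times> real) \<Rightarrow> real" where
  "game_f n p y = (\<Sum>i=1..n. inner (fst p - snd p i) (fst (y i)))"

definition r_star :: "nat \<Rightarrow> (nat \<Rightarrow> 'a::euclidean_space set) \<Rightarrow> real" where
  "r_star n \<Omega> = (INF x. Max ((\<lambda>i. infdist x (\<Omega> i)) ` {1..n}))"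

end

theory Submission
  imports Defs
begin

text \<open>
  Let g(x) = max_i dist(x, Omega_i), so that r* = min g. A minimiser x* of g may be taken in X,
  because projecting onto the convex set X moves a point closer to every Omega_i. Let v*_i be the
  projection of x* onto Omega_i. If x* were not a convex combination of the v*_i at the maximal
  distance r*, a direction separating x* from them would decrease all these distances at once;
  so x* = sum_i s_i v*_i with weights s_i supported on the farthest sets. The maximiser's strategy
  y_i = (s_i (x* - v*_i) / r*, s_i) pays exactly r* against (x*, v*), and by the obtuse-angle
  property of projections no (x, v) in X \<times> V pays less; conversely every y in Y pays at most
  max_i |x* - v*_i| = r* against (x*, v*). All equilibria of a zero-sum game share one value, and
  against an equilibrium (x, v) the maximiser may put all weight on the direction of x - v_i, so
  |x - v_i| \<le> r*.
\<close>

lemma convex_hull_finite_image_weights: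
  fixes c :: "'i \<Rightarrow> 'a::real_vector"
  assumes "finite J" and "x \<in> convex hull (c ` J)"
  obtains s where "\<forall>i\<in>J. 0 \<le> s i" and "sum s J = 1" and "(\<Sum>i\<in>J. s i *\<^sub>R c i) = x"
proof -
  obtain u where u: "\<forall>y\<in>c ` J. 0 \<le> u y" "sum u (c ` J) = 1" "(\<Sum>y\<in>c ` J. u y *\<^sub>R y) = x"
    using assms by (auto simp: convex_hull_finite)
  define fiber where "fiber y = {j\<in>J. c j = y}" for y
  define s where "s i = u (c i) / card (fiber (c i))" for i
  have fiber_sum: "(\<Sum>i\<in>fiber y. s i *\<^sub>R g (c i)) = u y *\<^sub>R g y" if "y \<in> c ` J"
    for y and g :: "'a \<Rightarrow> 'b::real_vector"
  proof -
    have "card (fiber y) \<noteq> 0" using that assms(1) by (auto simp: fiber_def)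
    have "(\<Sum>i\<in>fiber y. s i *\<^sub>R g (c i)) = (\<Sum>i\<in>fiber y. (u y / card (fiber y)) *\<^sub>R g y)"
      by (intro sum.cong) (simp_all add: s_def fiber_def)
    also have "\<dots> = u y *\<^sub>R g y" using \<open>card (fiber y) \<noteq> 0\<close> by (simp add: sum_constant_scaleR)
    finally show ?thesis .
  qed
  have "(\<Sum>i\<in>J. s i *\<^sub>R g (c i)) = (\<Sum>y\<in>c ` J. u y *\<^sub>R g y)" for g :: "'a \<Rightarrow> 'b::real_vector"
  proof -
    have "(\<Sum>i\<in>J. s i *\<^sub>R g (c i)) = (\<Sum>y\<in>c ` J. \<Sum>i\<in>fiber y. s i *\<^sub>R g (c i))"
      unfolding fiber_def by (rule sum.image_gen[OF assms(1)])
    also have "\<dots> = (\<Sum>y\<in>c ` J. u y *\<^sub>R g y)"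
      by (rule sum.cong) (simp_all add: fiber_sum)
    finally show ?thesis .
  qed
  from this[of "\<lambda>_. 1::real"] this[of id] have "sum s J = 1" "(\<Sum>i\<in>J. s i *\<^sub>R c i) = x"
    using u by simp_all
  moreover have "\<forall>i\<in>J. 0 \<le> s i" using u(1) by (simp add: s_def)
  ultimately show thesis using that by blast
qed

lemma eventually_norm_diff_scaleR_less:
  fixes w a :: "'a::real_inner"
  assumes "0 < inner w a"
  shows "\<forall>\<^sub>F t in at_right 0. norm (w - t *\<^sub>R a) < norm w"
proof -
  have "((\<lambda>t. 2 * inner w a - t * (norm a)\<^sup>2) \<longlongrightarrow> 2 * inner w a) (at_right 0)"
    by (intro tendsto_eq_intros) auto
  moreover have "0 < 2 * inner w a" using assms by simp
  ultimately have "\<forall>\<^sub>F t in at_right 0. 0 < 2 * inner w a - t * (norm a)\<^sup>2"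
    by (rule order_tendstoD(1))
  moreover have "\<forall>\<^sub>F t in at_right (0::real). 0 < t"
    by (simp add: eventually_at_right_less)
  ultimately show ?thesis
  proof eventually_elim
    case (elim t)
    have "(norm (w - t *\<^sub>R a))\<^sup>2 = (norm w)\<^sup>2 - t * (2 * inner w a - t * (norm a)\<^sup>2)"
      unfolding power2_norm_eq_inner
      by (simp add: inner_diff_left inner_diff_right inner_commute algebra_simps)
    also have "\<dots> < (norm w)\<^sup>2" using elim by simp
    finally show ?case by (rule power2_less_imp_less) simp
  qed
qed

lemma center_in_convex_hull_farthest:
  fixes c :: "'i \<Rightarrow> 'a::euclidean_space"
  assumes "finite K"
    and le_r: "\<forall>i\<in>K. dist x0 (c i) \<le> r"
    and optimal: "\<forall>x. \<exists>i\<in>K. r \<le> dist x (c i)"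
  shows "x0 \<in> convex hull (c ` {i\<in>K. dist x0 (c i) = r})"
proof (rule ccontr)
  define J where "J = {i\<in>K. dist x0 (c i) = r}"
  assume "x0 \<notin> convex hull (c ` {i\<in>K. dist x0 (c i) = r})"
  moreover have "closed (convex hull (c ` J))"
    using \<open>finite K\<close> by (simp add: J_def compact_imp_closed finite_imp_compact_convex_hull)
  ultimately obtain a b where "inner a x0 < b" and sep: "\<forall>z\<in>convex hull (c ` J). b < inner a z"
    using separating_hyperplane_closed_point[OF convex_convex_hull] unfolding J_def by blast
  have away: "0 < inner (c i - x0) a" if "i \<in> J" for i
  proof -
    have "b < inner a (c i)" using sep hull_inc[of "c i" "c ` J"] that by blast
    with \<open>inner a x0 < b\<close> show ?thesis by (simp add: inner_diff_left inner_diff_right inner_commute)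
  qed
  have "\<forall>\<^sub>F t in at_right 0. dist (x0 + t *\<^sub>R a) (c i) < r" if "i \<in> K" for i
  proof (cases "i \<in> J")
    case True
    then have "dist x0 (c i) = r" by (simp add: J_def)
    with eventually_norm_diff_scaleR_less[OF away[OF True]] show ?thesis
      by (simp add: dist_norm norm_minus_commute algebra_simps)
  next
    case False
    then have "dist x0 (c i) < r" using le_r that by (force simp: J_def)
    moreover have "((\<lambda>t. dist (x0 + t *\<^sub>R a) (c i)) \<longlongrightarrow> dist x0 (c i)) (at_right 0)"
      by (intro tendsto_eq_intros) auto
    ultimately show ?thesis by (simp add: order_tendstoD(2))
  qed
  then have "\<forall>\<^sub>F t in at_right 0. \<forall>i\<in>K. dist (x0 + t *\<^sub>R a) (c i) < r"
    using \<open>finite K\<close> by (simp add: eventually_ball_finite)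
  then obtain t :: real where "\<forall>i\<in>K. dist (x0 + t *\<^sub>R a) (c i) < r"
    using eventually_happens'[OF trivial_limit_at_right_real] by blast
  with optimal show False by (meson not_le)
qed

lemma center_convex_combination_of_farthest:
  fixes c :: "'i \<Rightarrow> 'a::euclidean_space"
  assumes "finite K" and "\<forall>i\<in>K. dist x0 (c i) \<le> r" and "\<forall>x. \<exists>i\<in>K. r \<le> dist x (c i)"
  obtains s where "\<forall>i\<in>K. 0 \<le> s i" and "sum s K = 1" and "(\<Sum>i\<in>K. s i *\<^sub>R c i) = x0"
    and "\<forall>i\<in>K. s i \<noteq> 0 \<longrightarrow> dist x0 (c i) = r"
proof -
  define J where "J = {i\<in>K. dist x0 (c i) = r}"
  have "J \<subseteq> K" "finite J" using assms(1) by (auto simp: J_def)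
  obtain s where s: "\<forall>i\<in>J. 0 \<le> s i" "sum s J = 1" "(\<Sum>i\<in>J. s i *\<^sub>R c i) = x0"
    using convex_hull_finite_image_weights[OF \<open>finite J\<close>]
      center_in_convex_hull_farthest[OF assms, folded J_def] by blast
  define s' where "s' i = (if i \<in> J then s i else 0)" for i
  have "sum s' K = sum s J" "(\<Sum>i\<in>K. s' i *\<^sub>R c i) = (\<Sum>i\<in>J. s i *\<^sub>R c i)"
    using assms(1) \<open>J \<subseteq> K\<close> by (auto simp: s'_def intro!: sum.mono_neutral_cong_right)
  with s show thesis by (intro that[of s']) (auto simp: s'_def J_def)
qed

lemma inner_scaled_farthest_eq:
  fixes c :: "'i \<Rightarrow> 'a::real_inner"
  assumes "sum s K = 1" and "\<forall>i\<in>K. s i \<noteq> 0 \<longrightarrow> dist x0 (c i) = r"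
  shows "(\<Sum>i\<in>K. s i * inner (x0 - c i) ((1 / r) *\<^sub>R (x0 - c i))) = r"
proof -
  have "s i * inner (x0 - c i) ((1 / r) *\<^sub>R (x0 - c i)) = s i * r" if "i \<in> K" for i
  proof (cases "s i = 0")
    case False
    with assms(2) that have "norm (x0 - c i) = r" by (simp add: dist_norm)
    then show ?thesis by (auto simp: power2_norm_eq_inner[symmetric] power2_eq_square)
  qed simp
  then have "(\<Sum>i\<in>K. s i * inner (x0 - c i) ((1 / r) *\<^sub>R (x0 - c i))) = sum s K * r"
    by (simp add: sum_distrib_right)
  with assms(1) show ?thesis by simp
qed

lemma inner_scaled_farthest_ge:
  fixes c v :: "'i \<Rightarrow> 'a::real_inner"
  assumes "\<forall>i\<in>K. 0 \<le> s i" and "sum s K = 1" and "(\<Sum>i\<in>K. s i *\<^sub>R c i) = x0"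
    and "\<forall>i\<in>K. s i \<noteq> 0 \<longrightarrow> dist x0 (c i) = r" and "0 \<le> r"
    and obtuse: "\<And>i. i \<in> K \<Longrightarrow> inner (x0 - c i) (v i - c i) \<le> 0"
  shows "r \<le> (\<Sum>i\<in>K. s i * inner (x - v i) ((1 / r) *\<^sub>R (x0 - c i)))"
proof -
  define u where "u i = (1 / r) *\<^sub>R (x0 - c i)" for i
  have "(\<Sum>i\<in>K. s i *\<^sub>R u i) = (1 / r) *\<^sub>R ((\<Sum>i\<in>K. s i) *\<^sub>R x0 - (\<Sum>i\<in>K. s i *\<^sub>R c i))"
    by (simp add: u_def scaleR_diff_right scaleR_sum_right scaleR_sum_left sum_subtractf)
  then have balanced: "(\<Sum>i\<in>K. s i *\<^sub>R u i) = 0" using assms(2,3) by simp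
  have "0 \<le> s i * inner (c i - v i) (u i)" if "i \<in> K" for i
  proof -
    have "inner (c i - v i) (u i) = (1 / r) * - inner (x0 - c i) (v i - c i)"
      by (simp add: u_def inner_commute inner_diff_left inner_diff_right)
    with obtuse[OF that] assms(1,5) that show ?thesis
      by (simp add: divide_nonpos_nonneg mult_nonneg_nonpos)
  qed
  then have "r \<le> (\<Sum>i\<in>K. s i * inner (x0 - c i) (u i)) + (\<Sum>i\<in>K. s i * inner (c i - v i) (u i))"
    using inner_scaled_farthest_eq[OF assms(2,4)] by (simp add: u_def sum_nonneg)
  also have "\<dots> = inner (x - x0) (\<Sum>i\<in>K. s i *\<^sub>R u i) + (\<Sum>i\<in>K. s i * inner (x0 - c i) (u i))
      + (\<Sum>i\<in>K. s i * inner (c i - v i) (u i))"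
    using balanced by simp
  also have "\<dots> = (\<Sum>i\<in>K. s i * inner (x - v i) (u i))"
    by (simp add: inner_sum_right sum.distrib[symmetric] inner_diff_left algebra_simps)
  finally show ?thesis by (simp add: u_def)
qed

lemma infdist_eq_dist_closest_point:
  assumes "closed S" and "S \<noteq> {}"
  shows "infdist x S = dist x (closest_point S x)"
proof (rule antisym)
  show "infdist x S \<le> dist x (closest_point S x)"
    using assms by (intro infdist_le closest_point_in_set)
  obtain z where "z \<in> S" and "infdist x S = dist x z"
    using infdist_attains_inf[OF assms] by blast
  then show "dist x (closest_point S x) \<le> infdist x S"
    using closest_point_le[OF assms(1)] by simp
qed

lemma infdist_closest_point_le:
  assumes "convex C" and "closed C" and "S \<subseteq> C"
  shows "infdist (closest_point C x) S \<le> infdist x S"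
proof (cases "S = {}")
  case False
  have "dist (closest_point C x) z \<le> dist x z" if "z \<in> S" for z
    using closest_point_lipschitz[OF assms(1,2), of x z] closest_point_self[of z C] that assms(3)
    by (metis empty_iff subsetD)
  with False show ?thesis
    unfolding infdist_def by (auto intro!: cINF_mono bdd_belowI[of _ 0])
qed (simp add: infdist_def)

definition max_infdist :: "'i set \<Rightarrow> ('i \<Rightarrow> 'a::metric_space set) \<Rightarrow> 'a \<Rightarrow> real" where
  "max_infdist K \<Omega> x = Max ((\<lambda>i. infdist x (\<Omega> i)) ` K)"

lemma infdist_le_max_infdist: "finite K \<Longrightarrow> i \<in> K \<Longrightarrow> infdist x (\<Omega> i) \<le> max_infdist K \<Omega> x"
  by (simp add: max_infdist_def)

lemma max_infdist_le_iff:
  "finite K \<Longrightarrow> K \<noteq> {} \<Longrightarrow> max_infdist K \<Omega> x \<le> c \<longleftrightarrow> (\<forall>i\<in>K. infdist x (\<Omega> i) \<le> c)"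
  by (simp add: max_infdist_def)

lemma max_infdist_attained:
  "finite K \<Longrightarrow> K \<noteq> {} \<Longrightarrow> \<exists>i\<in>K. max_infdist K \<Omega> x = infdist x (\<Omega> i)"
  unfolding max_infdist_def using Max_in[of "(\<lambda>i. infdist x (\<Omega> i)) ` K"] by fastforce

lemma max_infdist_le_add_dist:
  "finite K \<Longrightarrow> K \<noteq> {} \<Longrightarrow> max_infdist K \<Omega> x \<le> max_infdist K \<Omega> y + dist x y"
  by (simp add: max_infdist_le_iff)
    (meson add_right_mono infdist_le_max_infdist infdist_triangle order_trans)

lemma continuous_on_max_infdist:
  assumes "finite K" and "K \<noteq> {}"
  shows "continuous_on S (max_infdist K \<Omega>)"
proof (rule lipschitz_on_continuous_on[of 1], rule lipschitz_onI)
  fix x y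
  show "dist (max_infdist K \<Omega> x) (max_infdist K \<Omega> y) \<le> 1 * dist x y"
    using max_infdist_le_add_dist[OF assms, of \<Omega> x y] max_infdist_le_add_dist[OF assms, of \<Omega> y x]
    by (simp add: dist_real_def dist_commute abs_le_iff)
qed simp

lemma max_infdist_global_min_in_convex_hull:
  fixes \<Omega> :: "'i \<Rightarrow> 'a::euclidean_space set"
  assumes "finite K" and "K \<noteq> {}" and "\<And>i. i \<in> K \<Longrightarrow> compact (\<Omega> i)"
    and "\<And>i. i \<in> K \<Longrightarrow> \<Omega> i \<noteq> {}"
  obtains x0 where "x0 \<in> convex hull (\<Union>i\<in>K. \<Omega> i)"
    and "\<And>x. max_infdist K \<Omega> x0 \<le> max_infdist K \<Omega> x"
proof -
  define C where "C = convex hull (\<Union>i\<in>K. \<Omega> i)"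
  have "compact C" unfolding C_def
    by (intro compact_convex_hull compact_UN) (auto intro: assms)
  moreover have "C \<noteq> {}" using assms(2,4) by (auto simp: C_def)
  ultimately obtain x0 where "x0 \<in> C" and min_on_C: "\<forall>y\<in>C. max_infdist K \<Omega> x0 \<le> max_infdist K \<Omega> y"
    using continuous_attains_inf continuous_on_max_infdist[OF assms(1,2)] by blast
  have "max_infdist K \<Omega> x0 \<le> max_infdist K \<Omega> x" for x
  proof -
    have "closed C" using \<open>compact C\<close> by (rule compact_imp_closed)
    have "infdist (closest_point C x) (\<Omega> i) \<le> max_infdist K \<Omega> x" if "i \<in> K" for i
    proof -
      have "\<Omega> i \<subseteq> C" using that by (auto simp: C_def intro: hull_inc)
      then have "infdist (closest_point C x) (\<Omega> i) \<le> infdist x (\<Omega> i)"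
        by (intro infdist_closest_point_le \<open>closed C\<close>) (simp add: C_def)
      also have "\<dots> \<le> max_infdist K \<Omega> x" by (rule infdist_le_max_infdist[OF assms(1) that])
      finally show ?thesis .
    qed
    then have "max_infdist K \<Omega> (closest_point C x) \<le> max_infdist K \<Omega> x"
      by (simp add: max_infdist_le_iff[OF assms(1,2)])
    with min_on_C closest_point_in_set[OF \<open>closed C\<close> \<open>C \<noteq> {}\<close>] show ?thesis
      by (meson order_trans)
  qed
  with \<open>x0 \<in> C\<close> that show thesis unfolding C_def by blast
qed

lemma max_infdist_optimal_center_balanced:
  fixes \<Omega> :: "'i \<Rightarrow> 'a::euclidean_space set"
  assumes K: "finite K" "K \<noteq> {}" and compact: "\<And>i. i \<in> K \<Longrightarrow> compact (\<Omega> i)"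
    and nonempty: "\<And>i. i \<in> K \<Longrightarrow> \<Omega> i \<noteq> {}"
  obtains x0 s where "x0 \<in> convex hull (\<Union>i\<in>K. \<Omega> i)"
    and "\<And>x. max_infdist K \<Omega> x0 \<le> max_infdist K \<Omega> x"
    and "\<forall>i\<in>K. dist x0 (closest_point (\<Omega> i) x0) \<le> max_infdist K \<Omega> x0"
    and "\<forall>i\<in>K. 0 \<le> s i" and "sum s K = 1" and "(\<Sum>i\<in>K. s i *\<^sub>R closest_point (\<Omega> i) x0) = x0"
    and "\<forall>i\<in>K. s i \<noteq> 0 \<longrightarrow> dist x0 (closest_point (\<Omega> i) x0) = max_infdist K \<Omega> x0"
proof -
  obtain x0 where x0: "x0 \<in> convex hull (\<Union>i\<in>K. \<Omega> i)"
    and x0_min: "\<And>x. max_infdist K \<Omega> x0 \<le> max_infdist K \<Omega> x"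
    using max_infdist_global_min_in_convex_hull[of K \<Omega>, OF K compact nonempty] by blast
  define r where "r = max_infdist K \<Omega> x0"
  define c where "c i = closest_point (\<Omega> i) x0" for i
  have c_in: "c i \<in> \<Omega> i" if "i \<in> K" for i
    using closest_point_in_set[OF compact_imp_closed[OF compact[OF that]] nonempty[OF that]]
    by (simp add: c_def)
  have dist_c: "dist x0 (c i) = infdist x0 (\<Omega> i)" if "i \<in> K" for i
    using infdist_eq_dist_closest_point[OF compact_imp_closed[OF compact[OF that]] nonempty[OF that]]
    by (simp add: c_def)
  have c_le: "\<forall>i\<in>K. dist x0 (c i) \<le> r"
    using dist_c infdist_le_max_infdist[OF K(1)] by (auto simp: r_def)
  moreover have "\<forall>x. \<exists>i\<in>K. r \<le> dist x (c i)"
  proof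
    fix x
    obtain i where "i \<in> K" and "max_infdist K \<Omega> x = infdist x (\<Omega> i)"
      using max_infdist_attained[OF K] by blast
    moreover have "infdist x (\<Omega> i) \<le> dist x (c i)" using c_in[OF \<open>i \<in> K\<close>] by (rule infdist_le)
    ultimately show "\<exists>i\<in>K. r \<le> dist x (c i)"
      using x0_min[of x] unfolding r_def by force
  qed
  ultimately obtain s where "\<forall>i\<in>K. 0 \<le> s i" "sum s K = 1" "(\<Sum>i\<in>K. s i *\<^sub>R c i) = x0"
    "\<forall>i\<in>K. s i \<noteq> 0 \<longrightarrow> dist x0 (c i) = r"
    using center_convex_combination_of_farthest[OF K(1)] by blast
  with x0 x0_min c_le show thesis
    by (intro that[of x0 s]) (simp_all add: c_def r_def)
qed

lemma nash_eq_value_unique: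
  assumes "nash_eq P Q f p q" and "nash_eq P Q f p' q'"
  shows "f p q = f p' q'"
  using assms unfolding nash_eq_def by (meson antisym order_trans)

lemma weighted_strategy_in_game_Y:
  assumes "\<And>i. i \<in> {1..n} \<Longrightarrow> 0 \<le> s i" and "\<And>i. i \<in> {1..n} \<Longrightarrow> norm (u i) \<le> 1"
    and "sum s {1..n} = 1"
  shows "restrict (\<lambda>i. (s i *\<^sub>R u i, s i)) {1..n} \<in> game_Y n"
  using assms by (auto simp: game_Y_def mult_left_le)

lemma game_f_weighted_strategy:
  "game_f n p (restrict (\<lambda>i. (s i *\<^sub>R u i, s i)) {1..n}) = (\<Sum>i=1..n. s i * inner (fst p - snd p i) (u i))"
  unfolding game_f_def by (intro sum.cong) auto

lemma game_f_le:
  assumes "q \<in> game_Y n" and "\<And>i. i \<in> {1..n} \<Longrightarrow> norm (x - v i) \<le> M"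
  shows "game_f n (x, v) q \<le> M"
proof -
  have q: "\<And>i. i \<in> {1..n} \<Longrightarrow> norm (fst (q i)) \<le> snd (q i)" "(\<Sum>i=1..n. snd (q i)) = 1"
    using assms(1) by (auto simp: game_Y_def)
  have "game_f n (x, v) q \<le> (\<Sum>i=1..n. M * snd (q i))"
    unfolding game_f_def
  proof (rule sum_mono)
    fix i assume i: "i \<in> {1..n}"
    have "inner (x - v i) (fst (q i)) \<le> norm (x - v i) * norm (fst (q i))"
      by (rule norm_cauchy_schwarz)
    also have "\<dots> \<le> M * snd (q i)"
      using q(1)[OF i] assms(2)[OF i] by (intro mult_mono) (auto intro: order_trans[OF norm_ge_zero])
    finally show "inner (fst (x, v) - snd (x, v) i) (fst (q i)) \<le> M * snd (q i)" by simp
  qed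
  also have "\<dots> = M" using q(2) by (simp add: sum_distrib_left[symmetric])
  finally show ?thesis .
qed

lemma game_f_attains_norm:
  assumes "j \<in> {1..n}"
  shows "\<exists>q\<in>game_Y n. game_f n (x, v) q = norm (x - v j)"
proof
  let ?s = "\<lambda>i. if i = j then 1 else 0 :: real"
  show "restrict (\<lambda>i. (?s i *\<^sub>R sgn (x - v j), ?s i)) {1..n} \<in> game_Y n"
    using assms by (intro weighted_strategy_in_game_Y) (auto simp: norm_sgn)
  have "inner (x - v j) (sgn (x - v j)) = norm (x - v j)"
    by (cases "x = v j") (simp_all add: sgn_div_norm power2_norm_eq_inner[symmetric] power2_eq_square)
  with assms show "game_f n (x, v) (restrict (\<lambda>i. (?s i *\<^sub>R sgn (x - v j), ?s i)) {1..n}) = norm (x - v j)"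
    unfolding game_f_weighted_strategy by (simp add: if_distrib[of "\<lambda>a. a * _"] cong: if_cong)
qed

lemma game_equilibrium_at_balanced_center:
  fixes \<Omega> :: "nat \<Rightarrow> 'a::euclidean_space set"
  assumes "x0 \<in> game_X n \<Omega>" and "0 \<le> r"
    and c_in: "\<And>i. i \<in> {1..n} \<Longrightarrow> c i \<in> \<Omega> i"
    and obtuse: "\<And>i w. i \<in> {1..n} \<Longrightarrow> w \<in> \<Omega> i \<Longrightarrow> inner (x0 - c i) (w - c i) \<le> 0"
    and c_le: "\<And>i. i \<in> {1..n} \<Longrightarrow> dist x0 (c i) \<le> r"
    and s: "\<forall>i\<in>{1..n}. 0 \<le> s i" "sum s {1..n} = 1" "(\<Sum>i\<in>{1..n}. s i *\<^sub>R c i) = x0"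
    and farthest: "\<forall>i\<in>{1..n}. s i \<noteq> 0 \<longrightarrow> dist x0 (c i) = r"
  defines "q \<equiv> restrict (\<lambda>i. (s i *\<^sub>R ((1 / r) *\<^sub>R (x0 - c i)), s i)) {1..n}"
  shows "nash_eq (game_X n \<Omega> \<times> game_V n \<Omega>) (game_Y n) (game_f n) (x0, restrict c {1..n}) q"
    and "game_f n (x0, restrict c {1..n}) q = r"
proof -
  define v0 where "v0 = restrict c {1..n}"
  have game_f_q: "game_f n (x, v) q = (\<Sum>i=1..n. s i * inner (x - v i) ((1 / r) *\<^sub>R (x0 - c i)))"
    for x v
    unfolding q_def game_f_weighted_strategy by simp
  have "game_f n (x0, v0) q = (\<Sum>i=1..n. s i * inner (x0 - c i) ((1 / r) *\<^sub>R (x0 - c i)))"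
    unfolding game_f_q v0_def by (intro sum.cong) auto
  also have "\<dots> = r" using s(2) farthest by (rule inner_scaled_farthest_eq)
  finally show equilibrium_value: "game_f n (x0, restrict c {1..n}) q = r" by (simp add: v0_def)
  \<comment> \<open>No case split on \<open>r = 0\<close> is needed: then \<open>1 / r = 0\<close> and \<open>q\<close> has zero first components.\<close>
  have "q \<in> game_Y n"
    unfolding q_def using s(1,2) c_le \<open>0 \<le> r\<close>
    by (intro weighted_strategy_in_game_Y) (auto simp: divide_le_eq_1 dist_norm)
  moreover have "v0 \<in> game_V n \<Omega>"
    using c_in by (simp add: v0_def game_V_def)
  moreover have "game_f n (x0, v0) q \<le> game_f n (x, v) q" if "v \<in> game_V n \<Omega>" for x v
  proof -
    have "inner (x0 - c i) (v i - c i) \<le> 0" if "i \<in> {1..n}" for i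
      using \<open>v \<in> game_V n \<Omega>\<close> that by (intro obtuse) (auto simp: game_V_def)
    from inner_scaled_farthest_ge[OF s farthest \<open>0 \<le> r\<close> this, of x]
    show ?thesis unfolding equilibrium_value[folded v0_def] unfolding game_f_q by simp
  qed
  moreover have "game_f n (x0, v0) q' \<le> game_f n (x0, v0) q" if "q' \<in> game_Y n" for q'
    using game_f_le[OF that, of x0 v0 r] c_le equilibrium_value by (simp add: v0_def dist_norm)
  ultimately show "nash_eq (game_X n \<Omega> \<times> game_V n \<Omega>) (game_Y n) (game_f n) (x0, restrict c {1..n}) q"
    using \<open>x0 \<in> game_X n \<Omega>\<close> by (auto simp: nash_eq_def v0_def)
qed

lemma game_equilibrium_with_value_r_star:
  fixes \<Omega> :: "nat \<Rightarrow> 'a::euclidean_space set"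
  assumes "n \<ge> 1"
    and nonempty: "\<And>i. i \<in> {1..n} \<Longrightarrow> \<Omega> i \<noteq> {}"
    and compact: "\<And>i. i \<in> {1..n} \<Longrightarrow> compact (\<Omega> i)"
    and convex: "\<And>i. i \<in> {1..n} \<Longrightarrow> convex (\<Omega> i)"
  obtains p q where "nash_eq (game_X n \<Omega> \<times> game_V n \<Omega>) (game_Y n) (game_f n) p q"
    and "game_f n p q = r_star n \<Omega>"
proof -
  have K: "finite {1..n}" "{1..n} \<noteq> {}" using assms(1) by auto
  obtain x0 s where "x0 \<in> game_X n \<Omega>"
    and x0_min: "\<And>x. max_infdist {1..n} \<Omega> x0 \<le> max_infdist {1..n} \<Omega> x"
    and balanced:
      "\<forall>i\<in>{1..n}. dist x0 (closest_point (\<Omega> i) x0) \<le> max_infdist {1..n} \<Omega> x0"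
      "\<forall>i\<in>{1..n}. 0 \<le> s i" "sum s {1..n} = 1"
      "(\<Sum>i\<in>{1..n}. s i *\<^sub>R closest_point (\<Omega> i) x0) = x0"
      "\<forall>i\<in>{1..n}. s i \<noteq> 0 \<longrightarrow> dist x0 (closest_point (\<Omega> i) x0) = max_infdist {1..n} \<Omega> x0"
    using max_infdist_optimal_center_balanced[of "{1..n}" \<Omega>, OF K compact nonempty]
    unfolding game_X_def by blast
  have "r_star n \<Omega> = max_infdist {1..n} \<Omega> x0"
    unfolding r_star_def max_infdist_def[symmetric] by (rule cInf_eq_minimum) (use x0_min in auto)
  moreover have "0 \<le> max_infdist {1..n} \<Omega> x0"
    using balanced(1) zero_le_dist assms(1) by (meson atLeastAtMost_iff le_refl order_trans)
  ultimately show thesis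
    using game_equilibrium_at_balanced_center[OF \<open>x0 \<in> game_X n \<Omega>\<close> _ _ _ _ balanced(2-5)]
      closest_point_in_set[OF compact_imp_closed[OF compact] nonempty]
      closest_point_dot[OF convex compact_imp_closed[OF compact]] balanced(1) that
    by auto
qed

theorem theorem1:
  fixes n :: nat and \<Omega> :: "nat \<Rightarrow> 'a::euclidean_space set"
  assumes "n \<ge> 1"
    and "\<And>i. i \<in> {1..n} \<Longrightarrow> \<Omega> i \<noteq> {}"
    and "\<And>i. i \<in> {1..n} \<Longrightarrow> compact (\<Omega> i)"
    and "\<And>i. i \<in> {1..n} \<Longrightarrow> convex (\<Omega> i)"
  shows "(\<exists>p q. nash_eq (game_X n \<Omega> \<times> game_V n \<Omega>) (game_Y n) (game_f n) p q)
    \<and> (\<forall>x v q. nash_eq (game_X n \<Omega> \<times> game_V n \<Omega>) (game_Y n) (game_f n) (x, v) q \<longrightarrow>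
         game_f n (x, v) q = r_star n \<Omega>
       \<and> (\<forall>i\<in>{1..n}. cball x (r_star n \<Omega>) \<inter> \<Omega> i \<noteq> {})
       \<and> (\<forall>i\<in>{1..n}. v i \<in> cball x (r_star n \<Omega>) \<inter> \<Omega> i))"
proof -
  obtain p0 q0 where eq0: "nash_eq (game_X n \<Omega> \<times> game_V n \<Omega>) (game_Y n) (game_f n) p0 q0"
    and value0: "game_f n p0 q0 = r_star n \<Omega>"
    using game_equilibrium_with_value_r_star[of n \<Omega>, OF assms] by blast
  have "game_f n (x, v) q = r_star n \<Omega> \<and> (\<forall>i\<in>{1..n}. v i \<in> cball x (r_star n \<Omega>) \<inter> \<Omega> i)"
    if eq: "nash_eq (game_X n \<Omega> \<times> game_V n \<Omega>) (game_Y n) (game_f n) (x, v) q" for x v q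
  proof
    show equilibrium_value: "game_f n (x, v) q = r_star n \<Omega>"
      using nash_eq_value_unique[OF eq eq0] value0 by simp
    show "\<forall>i\<in>{1..n}. v i \<in> cball x (r_star n \<Omega>) \<inter> \<Omega> i"
    proof
      fix i assume i: "i \<in> {1..n}"
      from eq have "v i \<in> \<Omega> i" and "\<forall>q'\<in>game_Y n. game_f n (x, v) q' \<le> game_f n (x, v) q"
        using i by (auto simp: nash_eq_def game_V_def)
      with game_f_attains_norm[OF i, of x v] equilibrium_value show "v i \<in> cball x (r_star n \<Omega>) \<inter> \<Omega> i"
        by (force simp: dist_norm)
    qed
  qed
  with eq0 show ?thesis by blast
qed

end
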